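(* Let $n$ be a non-negative integer and $r,s\in\mathbb{C}\setminus\mathbb{Z}^{-}$ with $s\neq0$ and $r-s\notin\mathbb{Z}^{-}$. Then \[ \begin{aligned} &\sum_{k=0}^{n}\binom{n}{k}\frac{H_{k+s}-H_{n-k+r-s}}{(k+2)(k+s)\binom{n+r}{k+s}}-\sum_{k=0}^{n}\binom{n}{k}\frac{1}{(k+2)(k+s)^2\binom{n+r}{k+s}}\\ &\quad=\sum_{k=0}^{n}\binom{n}{k}\frac{(-1)^k(H_{k+s}-H_{r-s})}{(k+1)(k+2)(k+s)\binom{k+r}{k+s}}-\sum_{k=0}^{n}\binom{n}{k}\frac{(-1)^k}{(k+1)(k+2)(k+s)^2\binom{k+r}{k+s}}. \end{aligned} \]
   Context: $\mathbb{Z}^{-}$ denotes the set of negative integers. For complex $z$ not a negative integer, $H_z=\psi(z+1)+\gamma$ ($\psi$ the digamma function, $\gamma$ Euler's constant). Binomial coefficients with complex entries: $\binom{x}{y}=\frac{\Gamma(x+1)}{\Gamma(y+1)\Gamma(x-y+1)}$. *)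

theory Defs
  imports "HOL-Analysis.Analysis"
begin

definition neg_ints :: "complex set" where
  "neg_ints = {z. \<exists>m::nat. z = - of_nat (Suc m)}"

definition Hc :: "complex \<Rightarrow> complex" where
  "Hc z = Digamma (z + 1) + euler_mascheroni"

definition cbinom :: "complex \<Rightarrow> complex \<Rightarrow> complex" where
  "cbinom x y = Gamma (x + 1) / (Gamma (y + 1) * Gamma (x - y + 1))"

end

theory Submission
  imports Defs
begin

text \<open>
  Since \<open>1 / (z * cbinom M z) = Beta z (M - z + 1)\<close>, replacing \<open>s\<close> by a variable \<open>t\<close> turns each
  summand without harmonic numbers into \<open>Beta t (r - t + 1)\<close> times Pochhammer symbols in \<open>t\<close>, and a
  Chu--Vandermonde computation gives
  \<open>\<Sum>k. (n choose k) / ((k + 2) (k + t) cbinom (n + r) (k + t))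
     = \<Sum>k. (n choose k) (-1)^k / ((k + 1) (k + 2) (k + t) cbinom (k + r) (k + t))\<close>
  for all \<open>t\<close> in a punctured neighbourhood of \<open>s\<close> (the computation divides by \<open>(t - 1) (t - 2)\<close>).
  The derivative of \<open>1 / (z * cbinom M z)\<close> is
  \<open>(Hc z - Hc (M - z)) / (z * cbinom M z) - 1 / (z\<^sup>2 * cbinom M z)\<close>,
  so the theorem is this identity differentiated at \<open>t = s\<close>.
\<close>

lemma pochhammer_binomial_sum_alternating:
  fixes x y :: "'a::comm_ring_1"
  shows "(\<Sum>j\<le>m. of_nat (m choose j) * (-1)^j * pochhammer x j * pochhammer (y + of_nat j) (m - j))
           = pochhammer (y - x) m"
proof -
  have "(\<Sum>j\<le>m. of_nat (m choose j) * (-1)^j * pochhammer x j * pochhammer (y + of_nat j) (m - j))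
      = (-1)^m * (\<Sum>j\<le>m. of_nat (m choose j) * pochhammer x j * pochhammer (1 - y - of_nat m) (m - j))"
    unfolding sum_distrib_left
  proof (rule sum.cong[OF refl])
    fix j assume "j \<in> {..m}"
    then have "j \<le> m" by simp
    then have "pochhammer (y + of_nat j) (m - j) = (-1)^(m - j) * pochhammer (1 - y - of_nat m) (m - j)"
      using pochhammer_minus[of "y + of_nat m - 1" "m - j"] by (simp add: of_nat_diff algebra_simps)
    moreover have "(-1::'a)^j * (-1)^(m - j) = (-1)^m"
      using \<open>j \<le> m\<close> by (simp flip: power_add)
    ultimately show "of_nat (m choose j) * (-1)^j * pochhammer x j * pochhammer (y + of_nat j) (m - j)
        = (-1)^m * (of_nat (m choose j) * pochhammer x j * pochhammer (1 - y - of_nat m) (m - j))"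
      by (metis (no_types, lifting) mult.assoc mult.left_commute)
  qed
  also have "\<dots> = (-1)^m * pochhammer (- (y - x + of_nat m - 1)) m"
    using pochhammer_binomial_sum[of x "1 - y - of_nat m" m] by (simp add: algebra_simps)
  also have "\<dots> = pochhammer (y - x) m"
    using pochhammer_minus[of "y - x + of_nat m - 1" m] by (simp flip: power_add)
  finally show ?thesis .
qed

lemma pochhammer_binomial_sum_weighted:
  fixes x a :: "'a::comm_ring_1"
  shows "(\<Sum>j\<le>m. of_nat (m choose j) * (of_nat j * pochhammer x j) * pochhammer a (m - j))
           = x * (pochhammer (x + 1 + a) m - pochhammer (x + a) m)"
proof -
  have index: "of_nat j * pochhammer x j = x * pochhammer (x + 1) j - x * pochhammer x j" for j
    using pochhammer_rec[of x j] pochhammer_rec'[of x j] by (simp add: algebra_simps)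
  have "(\<Sum>j\<le>m. of_nat (m choose j) * (of_nat j * pochhammer x j) * pochhammer a (m - j))
      = x * (\<Sum>j\<le>m. of_nat (m choose j) * pochhammer (x + 1) j * pochhammer a (m - j))
        - x * (\<Sum>j\<le>m. of_nat (m choose j) * pochhammer x j * pochhammer a (m - j))"
    unfolding index sum_distrib_left sum_subtractf[symmetric] by (simp add: algebra_simps)
  then show ?thesis
    unfolding pochhammer_binomial_sum right_diff_distrib .
qed

lemma pochhammer_binomial_sum_weighted_tail:
  fixes x a :: "'a::comm_ring_1"
  shows "(\<Sum>k\<le>n. of_nat (Suc (Suc n) choose Suc (Suc k)) * (of_nat k + 1)
                  * pochhammer x (Suc (Suc k)) * pochhammer a (n - k))
       = x * (pochhammer (x + 1 + a) (Suc (Suc n)) - pochhammer (x + a) (Suc (Suc n)))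
         - pochhammer (x + a) (Suc (Suc n)) + pochhammer a (Suc (Suc n))"
proof -
  define f where
    "f j = of_nat (Suc (Suc n) choose j) * (of_nat j - 1) * pochhammer x j * pochhammer a (Suc (Suc n) - j)"
    for j
  have "(\<Sum>k\<le>n. of_nat (Suc (Suc n) choose Suc (Suc k)) * (of_nat k + 1)
                  * pochhammer x (Suc (Suc k)) * pochhammer a (n - k))
      = (\<Sum>k\<le>n. f (Suc (Suc k)))"
    by (simp add: f_def add_ac del: binomial_Suc_Suc)
  also have "\<dots> = (\<Sum>j\<le>Suc (Suc n). f j) - f 0 - f 1"
    unfolding sum.atMost_Suc_shift by simp
  also have "(\<Sum>j\<le>Suc (Suc n). f j)
      = x * (pochhammer (x + 1 + a) (Suc (Suc n)) - pochhammer (x + a) (Suc (Suc n)))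
        - pochhammer (x + a) (Suc (Suc n))"
    using pochhammer_binomial_sum_weighted[of "Suc (Suc n)" x a] pochhammer_binomial_sum[of x a "Suc (Suc n)"]
    by (simp add: f_def algebra_simps sum_subtractf del: binomial_Suc_Suc)
  finally show ?thesis
    by (simp add: f_def)
qed

lemma pochhammer_binomial_sum_alternating_tail:
  fixes x y :: "'a::comm_ring_1"
  shows "(\<Sum>k\<le>n. of_nat (Suc (Suc n) choose Suc (Suc k)) * (-1)^k
                  * pochhammer x (Suc (Suc k)) * pochhammer (y + 2 + of_nat k) (n - k))
       = pochhammer (y - x) (Suc (Suc n)) - pochhammer y (Suc (Suc n))
         + of_nat (Suc (Suc n)) * x * pochhammer (y + 1) (Suc n)"
proof -
  define f where
    "f j = of_nat (Suc (Suc n) choose j) * (-1)^j * pochhammer x j * pochhammer (y + of_nat j) (Suc (Suc n) - j)"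
    for j
  have "(\<Sum>j\<le>Suc (Suc n). f j) = pochhammer (y - x) (Suc (Suc n))"
    unfolding f_def by (rule pochhammer_binomial_sum_alternating)
  moreover have "(\<Sum>j\<le>Suc (Suc n). f j) = f 0 + f 1 + (\<Sum>k\<le>n. f (Suc (Suc k)))"
    unfolding sum.atMost_Suc_shift by simp
  ultimately show ?thesis
    by (simp add: f_def algebra_simps del: binomial_Suc_Suc)
qed

lemma binomial_pochhammer_Suc_Suc:
  fixes t :: "'a::comm_ring_1"
  shows "(of_nat n + 2) * (of_nat n + 1) * (t - 2) * (t - 1) * (of_nat (n choose k) * pochhammer t k)
       = of_nat (Suc (Suc n) choose Suc (Suc k)) * (of_nat k + 2) * (of_nat k + 1)
         * pochhammer (t - 2) (Suc (Suc k))"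
proof -
  have "Suc (Suc n) * Suc n * (n choose k) = (Suc (Suc n) choose Suc (Suc k)) * Suc (Suc k) * Suc k"
    using Suc_times_binomial_eq[of n k] Suc_times_binomial_eq[of "Suc n" "Suc k"]
    by (metis mult.assoc)
  then have "of_nat (Suc (Suc n) * Suc n * (n choose k))
      = (of_nat ((Suc (Suc n) choose Suc (Suc k)) * Suc (Suc k) * Suc k) :: 'a)"
    by (rule arg_cong)
  then have weight: "(of_nat n + 2) * (of_nat n + 1) * of_nat (n choose k)
      = of_nat (Suc (Suc n) choose Suc (Suc k)) * (of_nat k + 2) * (of_nat k + 1 :: 'a)"
    by (simp add: algebra_simps del: binomial_Suc_Suc)
  have shift: "(t - 2) * (t - 1) * pochhammer t k = pochhammer (t - 2) (Suc (Suc k))"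
    by (simp add: pochhammer_rec algebra_simps)
  have "(of_nat n + 2) * (of_nat n + 1) * (t - 2) * (t - 1) * (of_nat (n choose k) * pochhammer t k)
      = (of_nat n + 2) * (of_nat n + 1) * of_nat (n choose k) * ((t - 2) * (t - 1) * pochhammer t k)"
    by (simp only: mult_ac)
  then show ?thesis
    unfolding weight shift .
qed

lemma pochhammer_convolution_div_closed_form:
  fixes t a :: "'a::field_char_0"
  shows "(of_nat n + 2) * (of_nat n + 1) * (t - 2) * (t - 1)
           * (\<Sum>k\<le>n. of_nat (n choose k) * pochhammer t k * pochhammer a (n - k) / (of_nat k + 2))
       = pochhammer a (Suc (Suc n)) - pochhammer (t + a - 2) (Suc (Suc n))
         + of_nat (Suc (Suc n)) * (t - 2) * pochhammer (t + a - 1) (Suc n)"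
proof -
  define D where "D = (of_nat n + 2) * (of_nat n + 1) * (t - 2) * (t - 1)"
  \<comment> \<open>Multiplied by \<open>D\<close>, the sum becomes a Chu--Vandermonde sum with its first two terms removed.\<close>
  have "D * (\<Sum>k\<le>n. of_nat (n choose k) * pochhammer t k * pochhammer a (n - k) / (of_nat k + 2))
      = (\<Sum>k\<le>n. of_nat (Suc (Suc n) choose Suc (Suc k)) * (of_nat k + 1)
                  * pochhammer (t - 2) (Suc (Suc k)) * pochhammer a (n - k))"
    unfolding sum_distrib_left
  proof (rule sum.cong[OF refl])
    fix k
    have "(of_nat k + 2 :: 'a) \<noteq> 0"
      using of_nat_eq_0_iff[of "k + 2", where 'a='a] by (simp add: add.commute)
    have "D * (of_nat (n choose k) * pochhammer t k * pochhammer a (n - k) / (of_nat k + 2))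
        = D * (of_nat (n choose k) * pochhammer t k) * pochhammer a (n - k) / (of_nat k + 2)"
      by (simp only: mult.assoc times_divide_eq_right)
    also have "\<dots> = of_nat (Suc (Suc n) choose Suc (Suc k)) * (of_nat k + 2) * (of_nat k + 1)
            * pochhammer (t - 2) (Suc (Suc k)) * pochhammer a (n - k) / (of_nat k + 2)"
      unfolding D_def binomial_pochhammer_Suc_Suc ..
    also have "\<dots> = of_nat (Suc (Suc n) choose Suc (Suc k)) * (of_nat k + 1)
            * pochhammer (t - 2) (Suc (Suc k)) * pochhammer a (n - k) * (of_nat k + 2) / (of_nat k + 2)"
      by (simp only: mult_ac)
    also have "\<dots> = of_nat (Suc (Suc n) choose Suc (Suc k)) * (of_nat k + 1)
            * pochhammer (t - 2) (Suc (Suc k)) * pochhammer a (n - k)"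
      using \<open>of_nat k + 2 \<noteq> 0\<close> by (rule nonzero_mult_div_cancel_right)
    finally show "D * (of_nat (n choose k) * pochhammer t k * pochhammer a (n - k) / (of_nat k + 2))
        = of_nat (Suc (Suc n) choose Suc (Suc k)) * (of_nat k + 1)
            * pochhammer (t - 2) (Suc (Suc k)) * pochhammer a (n - k)" .
  qed
  also have "\<dots> = (t - 2) * (pochhammer (t + a - 1) (Suc (Suc n)) - pochhammer (t + a - 2) (Suc (Suc n)))
                    - pochhammer (t + a - 2) (Suc (Suc n)) + pochhammer a (Suc (Suc n))"
    using pochhammer_binomial_sum_weighted_tail[of n "t - 2" a] by (simp add: algebra_simps)
  also have "\<dots> = pochhammer a (Suc (Suc n)) - pochhammer (t + a - 2) (Suc (Suc n))
                    + of_nat (Suc (Suc n)) * (t - 2) * pochhammer (t + a - 1) (Suc n)"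
  proof -
    have rec: "pochhammer (t + a - 2) (Suc (Suc n)) = (t + a - 2) * pochhammer (t + a - 1) (Suc n)"
      "pochhammer (t + a - 1) (Suc (Suc n)) = (t + a + of_nat n) * pochhammer (t + a - 1) (Suc n)"
      using pochhammer_rec[of "t + a - 2" "Suc n"] pochhammer_rec'[of "t + a - 1" "Suc n"]
      by (simp_all add: algebra_simps)
    show ?thesis
      unfolding rec by (simp add: algebra_simps)
  qed
  finally show ?thesis
    unfolding D_def .
qed

lemma alternating_pochhammer_sum_div_closed_form:
  fixes t c :: "'a::field_char_0"
  assumes c: "pochhammer c n \<noteq> 0"
  shows "(of_nat n + 2) * (of_nat n + 1) * (t - 2) * (t - 1) * pochhammer c n
           * (\<Sum>k\<le>n. of_nat (n choose k) * (-1)^k * pochhammer t k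
                        / ((of_nat k + 1) * (of_nat k + 2) * pochhammer c k))
       = pochhammer (c - t) (Suc (Suc n)) - pochhammer (c - 2) (Suc (Suc n))
         + of_nat (Suc (Suc n)) * (t - 2) * pochhammer (c - 1) (Suc n)"
proof -
  define D where "D = (of_nat n + 2) * (of_nat n + 1) * (t - 2) * (t - 1)"
  have "D * pochhammer c n * (\<Sum>k\<le>n. of_nat (n choose k) * (-1)^k * pochhammer t k
                                  / ((of_nat k + 1) * (of_nat k + 2) * pochhammer c k))
      = (\<Sum>k\<le>n. of_nat (Suc (Suc n) choose Suc (Suc k)) * (-1)^k
                  * pochhammer (t - 2) (Suc (Suc k)) * pochhammer (c - 2 + 2 + of_nat k) (n - k))"
    unfolding sum_distrib_left
  proof (rule sum.cong[OF refl])
    fix k assume "k \<in> {..n}"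
    then have split: "pochhammer c n = pochhammer c k * pochhammer (c + of_nat k) (n - k)"
      by (simp add: pochhammer_product)
    define W where "W = (of_nat k + 1) * (of_nat k + 2) * pochhammer c k"
    have "W \<noteq> 0"
      using c split of_nat_eq_0_iff[of "k + 1", where 'a='a] of_nat_eq_0_iff[of "k + 2", where 'a='a]
      by (auto simp: W_def add.commute)
    have "D * pochhammer c n * (of_nat (n choose k) * (-1)^k * pochhammer t k / W)
        = D * (of_nat (n choose k) * pochhammer t k) * (-1)^k * pochhammer (c + of_nat k) (n - k)
            * pochhammer c k / W"
      unfolding split by (simp add: ac_simps)
    also have "\<dots> = of_nat (Suc (Suc n) choose Suc (Suc k)) * (of_nat k + 2) * (of_nat k + 1)
            * pochhammer (t - 2) (Suc (Suc k)) * (-1)^k * pochhammer (c + of_nat k) (n - k)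
            * pochhammer c k / W"
      unfolding D_def binomial_pochhammer_Suc_Suc ..
    also have "\<dots> = of_nat (Suc (Suc n) choose Suc (Suc k)) * (-1)^k
            * pochhammer (t - 2) (Suc (Suc k)) * pochhammer (c + of_nat k) (n - k) * W / W"
      unfolding W_def by (simp only: mult_ac)
    also have "\<dots> = of_nat (Suc (Suc n) choose Suc (Suc k)) * (-1)^k
          * pochhammer (t - 2) (Suc (Suc k)) * pochhammer (c - 2 + 2 + of_nat k) (n - k)"
      using \<open>W \<noteq> 0\<close> by simp
    finally show "D * pochhammer c n * (of_nat (n choose k) * (-1)^k * pochhammer t k / W)
        = of_nat (Suc (Suc n) choose Suc (Suc k)) * (-1)^k
          * pochhammer (t - 2) (Suc (Suc k)) * pochhammer (c - 2 + 2 + of_nat k) (n - k)" .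
  qed
  also have "\<dots> = pochhammer (c - t) (Suc (Suc n)) - pochhammer (c - 2) (Suc (Suc n))
                    + of_nat (Suc (Suc n)) * (t - 2) * pochhammer (c - 1) (Suc n)"
    using pochhammer_binomial_sum_alternating_tail[of n "t - 2" "c - 2"] by simp
  finally show ?thesis
    unfolding D_def .
qed

lemma pochhammer_binomial_sum_transformation:
  fixes t c :: "'a::field_char_0"
  assumes c: "pochhammer c n \<noteq> 0" and t: "t \<noteq> 1" "t \<noteq> 2"
  shows "(\<Sum>k\<le>n. of_nat (n choose k) * pochhammer t k * pochhammer (c - t) (n - k) / (of_nat k + 2))
       = pochhammer c n * (\<Sum>k\<le>n. of_nat (n choose k) * (-1)^k * pochhammer t k
                                     / ((of_nat k + 1) * (of_nat k + 2) * pochhammer c k))"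
proof -
  have "(of_nat n + 2) * (of_nat n + 1) * (t - 2) * (t - 1) \<noteq> (0::'a)"
    using t of_nat_eq_0_iff[of "n + 1", where 'a='a] of_nat_eq_0_iff[of "n + 2", where 'a='a]
    by (simp add: add.commute)
  moreover have "(of_nat n + 2) * (of_nat n + 1) * (t - 2) * (t - 1)
      * (\<Sum>k\<le>n. of_nat (n choose k) * pochhammer t k * pochhammer (c - t) (n - k) / (of_nat k + 2))
    = (of_nat n + 2) * (of_nat n + 1) * (t - 2) * (t - 1) * pochhammer c n
      * (\<Sum>k\<le>n. of_nat (n choose k) * (-1)^k * pochhammer t k
                   / ((of_nat k + 1) * (of_nat k + 2) * pochhammer c k))"
    unfolding pochhammer_convolution_div_closed_form alternating_pochhammer_sum_div_closed_form[OF c]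
    by simp
  ultimately show ?thesis
    by (simp add: mult.assoc)
qed

lemma neg_ints_iff_plus_one_nonpos_Ints: "z \<in> neg_ints \<longleftrightarrow> z + 1 \<in> \<int>\<^sub>\<le>\<^sub>0"
proof
  assume "z \<in> neg_ints"
  then obtain m where "z = - of_nat (Suc m)" by (auto simp: neg_ints_def)
  then show "z + 1 \<in> \<int>\<^sub>\<le>\<^sub>0" by simp
next
  assume "z + 1 \<in> \<int>\<^sub>\<le>\<^sub>0"
  then obtain m where "z + 1 = - of_nat m" by (auto elim!: nonpos_Ints_cases')
  then have "z = - of_nat m - 1" by (metis add_diff_cancel_right')
  then show "z \<in> neg_ints" unfolding neg_ints_def by (intro CollectI exI[of _ m]) simp
qed

lemma nonpos_Ints_iff_zero_or_neg_ints: "z \<in> \<int>\<^sub>\<le>\<^sub>0 \<longleftrightarrow> z = 0 \<or> z \<in> neg_ints"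
proof
  assume "z \<in> \<int>\<^sub>\<le>\<^sub>0"
  then obtain n where "z = - of_nat n" by (auto elim!: nonpos_Ints_cases')
  then show "z = 0 \<or> z \<in> neg_ints" by (cases n) (auto simp: neg_ints_def)
qed (auto simp: neg_ints_def simp del: of_nat_Suc)

lemma plus_of_nat_notin_nonpos_Ints:
  fixes x :: "'a::ring_1"
  assumes "x \<notin> \<int>\<^sub>\<le>\<^sub>0"
  shows "x + of_nat k \<notin> \<int>\<^sub>\<le>\<^sub>0"
  using nonpos_Ints_diff_Nats[of "x + of_nat k" "of_nat k"] assms by auto

lemma Gamma_plus_of_nat:
  fixes z :: "'a::Gamma"
  assumes "z \<notin> \<int>\<^sub>\<le>\<^sub>0"
  shows "Gamma (z + of_nat n) = pochhammer z n * Gamma z"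
  using pochhammer_Gamma[OF assms, of n] Gamma_nonzero[OF assms] by simp

lemma Beta_plus_of_nat:
  fixes a b :: "'a::Gamma"
  assumes a: "a \<notin> \<int>\<^sub>\<le>\<^sub>0" and b: "b \<notin> \<int>\<^sub>\<le>\<^sub>0" and ab: "a + b \<notin> \<int>\<^sub>\<le>\<^sub>0"
  shows "Beta (a + of_nat k) (b + of_nat j)
           = Beta a b * pochhammer a k * pochhammer b j / pochhammer (a + b) (k + j)"
proof -
  have sum: "a + of_nat k + (b + of_nat j) = a + b + of_nat (k + j)"
    by simp
  have "Gamma (a + b) \<noteq> 0" "pochhammer (a + b) (k + j) \<noteq> 0"
    using ab by (auto simp: Gamma_eq_zero_iff pochhammer_eq_0_iff)
  then show ?thesis
    unfolding Beta_def sum Gamma_plus_of_nat[OF a] Gamma_plus_of_nat[OF b] Gamma_plus_of_nat[OF ab]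
    by (simp add: field_simps)
qed

lemma has_field_derivative_Beta_complement:
  fixes z M :: "'a::Gamma"
  assumes "z \<notin> \<int>\<^sub>\<le>\<^sub>0" and "M - z + 1 \<notin> \<int>\<^sub>\<le>\<^sub>0"
  shows "((\<lambda>w. Beta w (M - w + 1)) has_field_derivative
            Beta z (M - z + 1) * (Digamma z - Digamma (M - z + 1))) (at z)"
  unfolding Beta_altdef using assms
  by (auto intro!: derivative_eq_intros simp: algebra_simps)

lemma inverse_times_cbinom_eq_Beta:
  assumes "z \<notin> \<int>\<^sub>\<le>\<^sub>0"
  shows "1 / (z * cbinom M z) = Beta z (M - z + 1)"
proof -
  have "z \<noteq> 0" using assms by auto
  then show ?thesis
    using Gamma_plus1[OF assms] by (simp add: cbinom_def Beta_def)
qed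

lemma inverse_times_cbinom_pochhammer:
  fixes t r :: complex
  assumes t: "t \<notin> \<int>\<^sub>\<le>\<^sub>0" and rt: "r - t + 1 \<notin> \<int>\<^sub>\<le>\<^sub>0" and r: "r + 1 \<notin> \<int>\<^sub>\<le>\<^sub>0" and "k \<le> m"
  shows "1 / ((of_nat k + t) * cbinom (of_nat m + r) (of_nat k + t))
           = Beta t (r - t + 1) * pochhammer t k * pochhammer (r - t + 1) (m - k) / pochhammer (r + 1) m"
proof -
  have "1 / ((of_nat k + t) * cbinom (of_nat m + r) (of_nat k + t))
      = Beta (t + of_nat k) (r - t + 1 + of_nat (m - k))"
    using inverse_times_cbinom_eq_Beta[of "of_nat k + t"] plus_of_nat_notin_nonpos_Ints[OF t, of k]
      \<open>k \<le> m\<close> by (simp add: of_nat_diff algebra_simps)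
  then show ?thesis
    using Beta_plus_of_nat[OF t rt, of k "m - k"] r \<open>k \<le> m\<close> by simp
qed

lemma has_field_derivative_inverse_times_cbinom:
  fixes z M :: complex
  assumes z: "z \<notin> \<int>\<^sub>\<le>\<^sub>0" and Mz: "M - z + 1 \<notin> \<int>\<^sub>\<le>\<^sub>0"
  shows "((\<lambda>w. 1 / (w * cbinom M w)) has_field_derivative
            (Hc z - Hc (M - z)) / (z * cbinom M z) - 1 / (z^2 * cbinom M z)) (at z)"
proof -
  have "z \<noteq> 0" using z by auto
  have "Beta z (M - z + 1) * (Digamma z - Digamma (M - z + 1))
      = 1 / (z * cbinom M z) * (Hc z - Hc (M - z) - 1 / z)"
    using Digamma_plus1[OF \<open>z \<noteq> 0\<close>]
    by (simp add: inverse_times_cbinom_eq_Beta[OF z] Hc_def algebra_simps)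
  also have "\<dots> = (Hc z - Hc (M - z)) / (z * cbinom M z) - 1 / (z^2 * cbinom M z)"
    by (simp add: divide_inverse algebra_simps power2_eq_square)
  finally have "((\<lambda>w. Beta w (M - w + 1)) has_field_derivative
                   (Hc z - Hc (M - z)) / (z * cbinom M z) - 1 / (z^2 * cbinom M z)) (at z)"
    using has_field_derivative_Beta_complement[OF z Mz] by simp
  then show ?thesis
    by (rule has_field_derivative_transform_within_open[where S = "- \<int>\<^sub>\<le>\<^sub>0"])
       (use z inverse_times_cbinom_eq_Beta in auto)
qed

lemma has_field_derivative_sum_inverse_times_cbinom:
  fixes s :: complex and w M a b :: "'i \<Rightarrow> complex"
  assumes "\<And>k. k \<in> A \<Longrightarrow> w k + s \<notin> \<int>\<^sub>\<le>\<^sub>0" and "\<And>k. k \<in> A \<Longrightarrow> M k - (w k + s) + 1 \<notin> \<int>\<^sub>\<le>\<^sub>0"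
  shows "((\<lambda>t. \<Sum>k\<in>A. a k / (b k * (w k + t) * cbinom (M k) (w k + t))) has_field_derivative
            (\<Sum>k\<in>A. a k * (Hc (w k + s) - Hc (M k - (w k + s))) / (b k * (w k + s) * cbinom (M k) (w k + s)))
          - (\<Sum>k\<in>A. a k / (b k * (w k + s)^2 * cbinom (M k) (w k + s)))) (at s)"
  unfolding sum_subtractf[symmetric]
proof (rule DERIV_sum)
  fix k assume "k \<in> A"
  have "((\<lambda>t. 1 / ((w k + t) * cbinom (M k) (w k + t))) has_field_derivative
          ((Hc (w k + s) - Hc (M k - (w k + s))) / ((w k + s) * cbinom (M k) (w k + s))
            - 1 / ((w k + s)^2 * cbinom (M k) (w k + s))) * 1) (at s)"
    by (rule DERIV_chain2[OF has_field_derivative_inverse_times_cbinom])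
       (use assms \<open>k \<in> A\<close> in \<open>auto intro!: derivative_eq_intros\<close>)
  from DERIV_cmult[OF this, of "a k / b k"]
  have "((\<lambda>t. a k / (b k * (w k + t) * cbinom (M k) (w k + t))) has_field_derivative
          a k / b k * ((Hc (w k + s) - Hc (M k - (w k + s))) / ((w k + s) * cbinom (M k) (w k + s))
            - 1 / ((w k + s)^2 * cbinom (M k) (w k + s)))) (at s)"
    by (simp add: mult.assoc)
  then show "((\<lambda>t. a k / (b k * (w k + t) * cbinom (M k) (w k + t))) has_field_derivative
          a k * (Hc (w k + s) - Hc (M k - (w k + s))) / (b k * (w k + s) * cbinom (M k) (w k + s))
            - a k / (b k * (w k + s)^2 * cbinom (M k) (w k + s))) (at s)"
    by (rule DERIV_cong) (simp add: divide_inverse right_diff_distrib mult_ac)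
qed

lemma has_field_derivative_unique_eventually:
  fixes f g :: "'a::{real_normed_field,perfect_space} \<Rightarrow> 'a"
  assumes f: "(f has_field_derivative a) (at x)" and g: "(g has_field_derivative b) (at x)"
    and eq: "\<forall>\<^sub>F t in at x. f t = g t"
  shows "a = b"
proof -
  have "(f \<longlongrightarrow> f x) (at x)" "(f \<longlongrightarrow> g x) (at x)"
    using DERIV_isCont[OF f] DERIV_isCont[OF g] tendsto_cong[OF eq] by (simp_all add: isCont_def)
  then have "f x = g x"
    by (rule tendsto_unique[OF at_neq_bot])
  with eq have "(g has_field_derivative a) (at x)"
    using f has_field_derivative_cong_eventually by blast
  then show ?thesis
    using g by (rule DERIV_unique)
qed

lemma sum_inverse_times_cbinom_identity:
  fixes t r :: complex
  assumes t: "t \<notin> \<int>\<^sub>\<le>\<^sub>0" and rt: "r - t + 1 \<notin> \<int>\<^sub>\<le>\<^sub>0" and r: "r + 1 \<notin> \<int>\<^sub>\<le>\<^sub>0"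
    and "t \<noteq> 1" "t \<noteq> 2"
  shows "(\<Sum>k=0..n. of_nat (n choose k)
            / ((of_nat k + 2) * (of_nat k + t) * cbinom (of_nat n + r) (of_nat k + t)))
       = (\<Sum>k=0..n. of_nat (n choose k) * (-1)^k
            / ((of_nat k + 1) * (of_nat k + 2) * (of_nat k + t) * cbinom (of_nat k + r) (of_nat k + t)))"
proof -
  define B where "B = Beta t (r - t + 1)"
  have "pochhammer (r + 1) n \<noteq> 0"
    using r pochhammer_eq_0_imp_nonpos_Int by blast
  have "(\<Sum>k=0..n. of_nat (n choose k)
            / ((of_nat k + 2) * (of_nat k + t) * cbinom (of_nat n + r) (of_nat k + t)))
      = B / pochhammer (r + 1) n * (\<Sum>k\<le>n. of_nat (n choose k) * pochhammer t k
            * pochhammer (r + 1 - t) (n - k) / (of_nat k + 2))"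
    unfolding sum_distrib_left atLeast0AtMost
  proof (rule sum.cong[OF refl])
    fix k assume "k \<in> {..n}"
    then show "of_nat (n choose k) / ((of_nat k + 2) * (of_nat k + t) * cbinom (of_nat n + r) (of_nat k + t))
        = B / pochhammer (r + 1) n * (of_nat (n choose k) * pochhammer t k
            * pochhammer (r + 1 - t) (n - k) / (of_nat k + 2))"
      using inverse_times_cbinom_pochhammer[OF t rt r, of k n]
      by (simp add: B_def divide_inverse mult_ac diff_add_eq)
  qed
  also have "\<dots> = B * (\<Sum>k\<le>n. of_nat (n choose k) * (-1)^k * pochhammer t k
            / ((of_nat k + 1) * (of_nat k + 2) * pochhammer (r + 1) k))"
    using pochhammer_binomial_sum_transformation[of "r + 1" n t] \<open>pochhammer (r + 1) n \<noteq> 0\<close> assms(4,5)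
    by simp
  also have "\<dots> = (\<Sum>k=0..n. of_nat (n choose k) * (-1)^k
            / ((of_nat k + 1) * (of_nat k + 2) * (of_nat k + t) * cbinom (of_nat k + r) (of_nat k + t)))"
    unfolding sum_distrib_left atLeast0AtMost
  proof (rule sum.cong[OF refl])
    fix k
    show "B * (of_nat (n choose k) * (-1)^k * pochhammer t k
            / ((of_nat k + 1) * (of_nat k + 2) * pochhammer (r + 1) k))
        = of_nat (n choose k) * (-1)^k
            / ((of_nat k + 1) * (of_nat k + 2) * (of_nat k + t) * cbinom (of_nat k + r) (of_nat k + t))"
      using inverse_times_cbinom_pochhammer[OF t rt r, of k k]
      by (simp add: B_def divide_inverse mult_ac)
  qed
  finally show ?thesis .
qed

lemma eventually_sum_inverse_times_cbinom_identity:
  fixes s r :: complex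
  assumes s: "s \<notin> \<int>\<^sub>\<le>\<^sub>0" and rs: "r - s + 1 \<notin> \<int>\<^sub>\<le>\<^sub>0" and r: "r + 1 \<notin> \<int>\<^sub>\<le>\<^sub>0"
  shows "\<forall>\<^sub>F t in at s.
           (\<Sum>k=0..n. of_nat (n choose k)
              / ((of_nat k + 2) * (of_nat k + t) * cbinom (of_nat n + r) (of_nat k + t)))
         = (\<Sum>k=0..n. of_nat (n choose k) * (-1)^k
              / ((of_nat k + 1) * (of_nat k + 2) * (of_nat k + t) * cbinom (of_nat k + r) (of_nat k + t)))"
proof -
  have "open (- \<int>\<^sub>\<le>\<^sub>0 :: complex set)"
    by (simp add: open_Compl)
  moreover have "((\<lambda>t. t) \<longlongrightarrow> s) (at s)" "((\<lambda>t. r - t + 1) \<longlongrightarrow> r - s + 1) (at s)"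
    by (intro tendsto_intros)+
  ultimately have "\<forall>\<^sub>F t in at s. t \<notin> \<int>\<^sub>\<le>\<^sub>0" "\<forall>\<^sub>F t in at s. r - t + 1 \<notin> \<int>\<^sub>\<le>\<^sub>0"
    using topological_tendstoD s rs by fastforce+
  moreover have "\<forall>\<^sub>F t in at s. t \<noteq> 1" "\<forall>\<^sub>F t in at s. t \<noteq> 2"
    by (rule eventually_neq_at_within)+
  ultimately show ?thesis
    by eventually_elim (use sum_inverse_times_cbinom_identity r in blast)
qed

theorem theorem24:
  fixes n :: nat and r s :: complex
  assumes "r \<notin> neg_ints" and "s \<notin> neg_ints" and "s \<noteq> 0" and "r - s \<notin> neg_ints"
  shows "(\<Sum>k=0..n. of_nat (n choose k) * (Hc (of_nat k + s) - Hc (of_nat n - of_nat k + r - s))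
            / ((of_nat k + 2) * (of_nat k + s) * cbinom (of_nat n + r) (of_nat k + s)))
       - (\<Sum>k=0..n. of_nat (n choose k)
            / ((of_nat k + 2) * (of_nat k + s)^2 * cbinom (of_nat n + r) (of_nat k + s)))
       = (\<Sum>k=0..n. of_nat (n choose k) * (-1)^k * (Hc (of_nat k + s) - Hc (r - s))
            / ((of_nat k + 1) * (of_nat k + 2) * (of_nat k + s) * cbinom (of_nat k + r) (of_nat k + s)))
       - (\<Sum>k=0..n. of_nat (n choose k) * (-1)^k
            / ((of_nat k + 1) * (of_nat k + 2) * (of_nat k + s)^2 * cbinom (of_nat k + r) (of_nat k + s)))"
proof -
  have s: "s \<notin> \<int>\<^sub>\<le>\<^sub>0"
    using assms(2,3) nonpos_Ints_iff_zero_or_neg_ints by blast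
  have r: "r + 1 \<notin> \<int>\<^sub>\<le>\<^sub>0" and rs: "r - s + 1 \<notin> \<int>\<^sub>\<le>\<^sub>0"
    using assms(1,4) by (simp_all add: neg_ints_iff_plus_one_nonpos_Ints)
  have ks: "of_nat k + s \<notin> \<int>\<^sub>\<le>\<^sub>0" if "k \<in> {0..n}" for k
    using plus_of_nat_notin_nonpos_Ints[OF s] by (simp add: add.commute)
  have nrks: "of_nat n + r - (of_nat k + s) + 1 \<notin> \<int>\<^sub>\<le>\<^sub>0" if "k \<in> {0..n}" for k
    using plus_of_nat_notin_nonpos_Ints[OF rs, of "n - k"] that by (simp add: of_nat_diff algebra_simps)
  have krks: "of_nat k + r - (of_nat k + s) + 1 \<notin> \<int>\<^sub>\<le>\<^sub>0" if "k \<in> {0..n}" for k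
    using rs by simp
  have complement: "of_nat n + r - (of_nat k + s) = of_nat n - of_nat k + r - s"
    "of_nat k + r - (of_nat k + s) = r - s" for k :: nat
    by simp_all
  from has_field_derivative_unique_eventually[OF
      has_field_derivative_sum_inverse_times_cbinom[OF ks nrks]
      has_field_derivative_sum_inverse_times_cbinom[OF ks krks]
      eventually_sum_inverse_times_cbinom_identity[OF s rs r]]
  show ?thesis
    by (simp only: complement)
qed

end
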